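(* Let $\mathcal{X}$ be an input space with a probability distribution $p$, $\mathcal{Y}$ a finite label set, $\ell$ the 0-1 loss $\ell(y,y')=\mathbb{I}[y\neq y']$, and $L(F,F')=\mathbb{E}_{x\sim p}[\ell(F(x),F'(x))]$ for $F,F':\mathcal{X}\to\mathcal{Y}$. Let $\mathcal{B}$ be the set of all (measurable) functions $\mathcal{X}\to\mathcal{Y}$, $\mathcal{B}_+\subseteq\mathcal{B}$ the acceptable black boxes, $\mathcal{E}\subseteq\mathcal{B}$ the class of explanations and $\mathcal{E}_+\subseteq\mathcal{E}$ the acceptable explanations, and let $\epsilon_+\ge0$. Let $B\in\mathcal{B}$ with $\hat{\mathcal{O}}^*(B)=0$, i.e. $B\notin\mathcal{B}_+$. Let $E\in\mathcal{E}$ minimize $L(\cdot,B)$ over $\mathcal{E}$; let $B_+\in\mathcal{B}_+$ minimize $L(\cdot,B)$ over $\mathcal{B}_+$; let $E'\in\mathcal{E}$ minimize $L(\cdot,B_+)$ over $\mathcal{E}$; and let $E_+\in\mathcal{E}_+$ minimize $L(\cdot,B_+)$ over $\mathcal{E}_+$ (all these minimizers are assumed to exist). Define the restriction error $\epsilon_R=L(B_+,B)$ and the acceptable relative error $\epsilon_A=L(E_+,B_+)-L(E',B_+)\ge0$. If $L(E,B)+2\epsilon_R+\epsilon_A\le\epsilon_+$, then $E_+$ is potentially misleading for $B$, i.e. $\hat{\mathcal{O}}(E_+)\neq\hat{\mathcal{O}}^*(B)$.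
   Context: Acceptable black boxes/explanations are those in which all desired features appear and no prohibited features appear; here they are treated as given subsets $\mathcal{B}_+\subseteq\mathcal{B}$ and $\mathcal{E}_+\subseteq\mathcal{E}$. For a black box $B$ and fidelity threshold $\epsilon_+\ge0$, define $\hat{\mathcal{O}}(E)=\mathbb{I}[E\in\mathcal{E}_+\wedge L(E,B)\le\epsilon_+]$ (estimated user trust of $B$ given explanation $E$) and $\hat{\mathcal{O}}^*(B)=\mathbb{I}[B\in\mathcal{B}_+]$. An explanation $E$ of $B$ is potentially misleading if $\hat{\mathcal{O}}(E)\neq\hat{\mathcal{O}}^*(B)$. *)

theory Defs
  imports "HOL-Probability.Probability"
begin

definition zero_one_loss :: "'y \<Rightarrow> 'y \<Rightarrow> real" where
  "zero_one_loss y y' = (if y \<noteq> y' then 1 else 0)"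

definition L :: "'x measure \<Rightarrow> ('x \<Rightarrow> 'y) \<Rightarrow> ('x \<Rightarrow> 'y) \<Rightarrow> real" where
  "L p F F' = (\<integral>x. zero_one_loss (F x) (F' x) \<partial>p)"

definition black_boxes :: "'x measure \<Rightarrow> ('x \<Rightarrow> 'y) set" where
  "black_boxes p = measurable p (count_space UNIV)"

text \<open>Estimated user trust of B given explanation E.\<close>
definition O_hat :: "'x measure \<Rightarrow> ('x \<Rightarrow> 'y) set \<Rightarrow> real \<Rightarrow> ('x \<Rightarrow> 'y) \<Rightarrow> ('x \<Rightarrow> 'y) \<Rightarrow> nat" where
  "O_hat p Eplus eps_plus B E = (if E \<in> Eplus \<and> L p E B \<le> eps_plus then 1 else 0)"

definition O_star :: "('x \<Rightarrow> 'y) set \<Rightarrow> ('x \<Rightarrow> 'y) \<Rightarrow> nat" where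
  "O_star Bplus B = (if B \<in> Bplus then 1 else 0)"

definition potentially_misleading ::
  "'x measure \<Rightarrow> ('x \<Rightarrow> 'y) set \<Rightarrow> ('x \<Rightarrow> 'y) set \<Rightarrow> real \<Rightarrow> ('x \<Rightarrow> 'y) \<Rightarrow> ('x \<Rightarrow> 'y) \<Rightarrow> bool" where
  "potentially_misleading p Bplus Eplus eps_plus B E \<longleftrightarrow> O_hat p Eplus eps_plus B E \<noteq> O_star Bplus B"

definition is_minimizer :: "'x measure \<Rightarrow> ('x \<Rightarrow> 'y) set \<Rightarrow> ('x \<Rightarrow> 'y) \<Rightarrow> ('x \<Rightarrow> 'y) \<Rightarrow> bool" where
  "is_minimizer p C T M \<longleftrightarrow> M \<in> C \<and> (\<forall>F\<in>C. L p M T \<le> L p F T)"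

end

theory Submission
  imports Defs
begin

text \<open>The expected 0-1 loss is a pseudometric on measurable classifiers. Chaining its triangle
  inequality through the restricted black box \<open>B\<^sub>+\<close> and using the minimality of \<open>E'\<close> gives
  \<open>L(E\<^sub>+,B) \<le> L(E\<^sub>+,B\<^sub>+) + \<epsilon>\<^sub>R = \<epsilon>\<^sub>A + L(E',B\<^sub>+) + \<epsilon>\<^sub>R \<le> \<epsilon>\<^sub>A + L(E,B\<^sub>+) + \<epsilon>\<^sub>R \<le> L(E,B) + 2\<epsilon>\<^sub>R + \<epsilon>\<^sub>A\<close>.
  So \<open>E\<^sub>+\<close> is acceptable and faithful enough to earn trust, although \<open>B\<close> is not acceptable.\<close>

lemma zero_one_loss_commute: "zero_one_loss y y' = zero_one_loss y' y"
  unfolding zero_one_loss_def by auto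

lemma zero_one_loss_triangle: "zero_one_loss y y'' \<le> zero_one_loss y y' + zero_one_loss y' y''"
  unfolding zero_one_loss_def by auto

lemma zero_one_loss_measurable:
  fixes F G :: "'x \<Rightarrow> 'y::countable"
  assumes "F \<in> black_boxes p" "G \<in> black_boxes p"
  shows "(\<lambda>x. zero_one_loss (F x) (G x)) \<in> borel_measurable p"
proof -
  have "(\<lambda>x. zero_one_loss y (G x)) \<in> borel_measurable p" for y
    using assms(2) unfolding black_boxes_def
    by (rule measurable_compose[of _ _ "count_space UNIV"]) simp
  then show ?thesis
    using measurable_compose_countable[where f = "\<lambda>y x. zero_one_loss y (G x)" and g = F]
      assms(1) unfolding black_boxes_def by blast
qed

lemma integrable_zero_one_loss:
  fixes F G :: "'x \<Rightarrow> 'y::countable"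
  assumes "finite_measure p" "F \<in> black_boxes p" "G \<in> black_boxes p"
  shows "integrable p (\<lambda>x. zero_one_loss (F x) (G x))"
proof -
  interpret finite_measure p by fact
  show ?thesis
    using zero_one_loss_measurable[OF assms(2,3)]
    by (intro integrable_const_bound[where B = 1]) (auto simp: zero_one_loss_def)
qed

lemma L_commute: "L p F G = L p G F"
  unfolding L_def by (simp add: zero_one_loss_commute)

lemma L_triangle:
  fixes F G H :: "'x \<Rightarrow> 'y::countable"
  assumes "finite_measure p" "F \<in> black_boxes p" "G \<in> black_boxes p" "H \<in> black_boxes p"
  shows "L p F H \<le> L p F G + L p G H"
proof -
  have "L p F H \<le> (\<integral>x. zero_one_loss (F x) (G x) + zero_one_loss (G x) (H x) \<partial>p)"
    unfolding L_def using assms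
    by (intro integral_mono Bochner_Integration.integrable_add integrable_zero_one_loss zero_one_loss_triangle)
  also have "\<dots> = L p F G + L p G H"
    unfolding L_def using assms by (intro Bochner_Integration.integral_add integrable_zero_one_loss)
  finally show ?thesis .
qed

lemma L_restricted_explanation_le:
  fixes B E B_plus E' E_plus :: "'x \<Rightarrow> 'y::countable"
  assumes "finite_measure p"
    and "B \<in> black_boxes p" "E \<in> black_boxes p" "B_plus \<in> black_boxes p" "E_plus \<in> black_boxes p"
    and "L p E' B_plus \<le> L p E B_plus"
  shows "L p E_plus B \<le> L p E B + 2 * L p B_plus B + (L p E_plus B_plus - L p E' B_plus)"
proof -
  have "L p E_plus B \<le> L p E_plus B_plus + L p B_plus B"
    using assms by (intro L_triangle)
  moreover have "L p E B_plus \<le> L p E B + L p B_plus B"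
    using L_triangle[OF assms(1,3,2,4)] by (simp add: L_commute[of p B])
  ultimately show ?thesis
    using assms(6) by linarith
qed

theorem theorem2:
  fixes p :: "'x measure"
    and Bplus Ecal Eplus :: "('x \<Rightarrow> 'y::finite) set"
    and eps_plus :: real
    and B E B_plus E' E_plus :: "'x \<Rightarrow> 'y"
  assumes "prob_space p"
    and "Bplus \<subseteq> black_boxes p"
    and "Ecal \<subseteq> black_boxes p"
    and "Eplus \<subseteq> Ecal"
    and "eps_plus \<ge> 0"
    and "B \<in> black_boxes p"
    and "O_star Bplus B = 0"
    and "is_minimizer p Ecal B E"
    and "is_minimizer p Bplus B B_plus"
    and "is_minimizer p Ecal B_plus E'"
    and "is_minimizer p Eplus B_plus E_plus"
    and "L p E B + 2 * L p B_plus B + (L p E_plus B_plus - L p E' B_plus) \<le> eps_plus"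
  shows "potentially_misleading p Bplus Eplus eps_plus B E_plus"
proof -
  have E: "E \<in> Ecal" and B_plus: "B_plus \<in> Bplus" and E_plus: "E_plus \<in> Eplus"
    and E'_min: "L p E' B_plus \<le> L p E B_plus"
    using assms(8-11) unfolding is_minimizer_def by auto
  have "finite_measure p"
    using assms(1) by (rule prob_space.finite_measure)
  then have "L p E_plus B \<le> eps_plus"
    using L_restricted_explanation_le[of p B E B_plus E_plus E'] E B_plus E_plus E'_min
      assms(2-4,6,12) by fastforce
  then show ?thesis
    using E_plus assms(7) unfolding potentially_misleading_def O_hat_def by simp
qed

end
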